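(* There exists a family of broadcast protocols $(P_n)_{n}$, $P_n=(Q_n,I_n,M_n,\Delta_n)$, with target sets $F_n\subseteq Q_n$, such that for every $n$: there exists a reconfigurable execution of $P_n$ covering $F_n$ with $3$ nodes; and every lossy execution of $P_n$ covering $F_n$ has $\Omega(n)$ nodes.
   Context: A broadcast protocol is a tuple $P=(Q,I,M,\Delta)$ where $Q$ is a finite set of states, $I\subseteq Q$ initial states, $M$ a finite message alphabet and $\Delta\subseteq Q\times\{!!m,\ ??m \mid m\in M\}\times Q$ ($!!m$ = broadcast, $??m$ = reception); protocols are complete for receptions (for every $q$, $m$ there is $q'$ with $(q,??m,q')\in\Delta$). A configuration is a finite undirected graph $\gamma=(V,E,L)$, $E$ symmetric irreflexive, $L:V\to Q$; initial if $L(V)\subseteq I$. A reconfigurable step from $(V,E,L)$ to $(V,E',L')$ ($E'$ arbitrary): some node $v$ and $m$ with $(L(v),!!m,L'(v))\in\Delta$, every neighbour $v'$ of $v$ in $E$ satisfies $(L(v'),??m,L'(v'))\in\Delta$, every other node keeps its label. A lossy step from $(V,E,L)$ to $(V,E,L')$ (edges fixed): some $v$, $m$ with $(L(v),!!m,L'(v))\in\Delta$ and either all other nodes keep their labels (lost broadcast) or as in the reconfigurable step with $E$ (successful broadcast). A reconfigurable (resp. lossy) execution is a sequence $\gamma_0,\dots,\gamma_r$ with $\gamma_0$ initial and consecutive reconfigurable (resp. lossy) steps; its number of nodes is $|V|$, and it covers $F$ if some node of $\gamma_r$ has a label in $F$. *)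

theory Defs
  imports Complex_Main
begin

datatype 'm action = Bcast 'm | Recv 'm

record ('q, 'm) protocol =
  states :: "'q set"
  init   :: "'q set"
  msgs   :: "'m set"
  trans  :: "('q \<times> 'm action \<times> 'q) set"

definition wf_protocol :: "('q, 'm) protocol \<Rightarrow> bool" where
  "wf_protocol P \<longleftrightarrow>
     finite (states P) \<and> finite (msgs P) \<and> init P \<subseteq> states P \<and>
     (\<forall>(q, a, q') \<in> trans P. q \<in> states P \<and> q' \<in> states P \<and>
         (\<exists>m \<in> msgs P. a = Bcast m \<or> a = Recv m)) \<and>
     (\<forall>q \<in> states P. \<forall>m \<in> msgs P. \<exists>q'. (q, Recv m, q') \<in> trans P)"

text \<open>A configuration: finite undirected graph (V, E, L); only the labels on V matter.\<close>
record ('v, 'q) config =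
  nodes :: "'v set"
  edges :: "('v \<times> 'v) set"
  label :: "'v \<Rightarrow> 'q"

definition is_config :: "('q, 'm) protocol \<Rightarrow> ('v, 'q) config \<Rightarrow> bool" where
  "is_config P \<gamma> \<longleftrightarrow>
     finite (nodes \<gamma>) \<and> edges \<gamma> \<subseteq> nodes \<gamma> \<times> nodes \<gamma> \<and>
     sym (edges \<gamma>) \<and> irrefl (edges \<gamma>) \<and> label \<gamma> ` nodes \<gamma> \<subseteq> states P"

definition initial_config :: "('q, 'm) protocol \<Rightarrow> ('v, 'q) config \<Rightarrow> bool" where
  "initial_config P \<gamma> \<longleftrightarrow> is_config P \<gamma> \<and> label \<gamma> ` nodes \<gamma> \<subseteq> init P"

definition succ_bcast :: "('q, 'm) protocol \<Rightarrow> 'v set \<Rightarrow> ('v \<times> 'v) set \<Rightarrow>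
    ('v \<Rightarrow> 'q) \<Rightarrow> ('v \<Rightarrow> 'q) \<Rightarrow> 'v \<Rightarrow> 'm \<Rightarrow> bool" where
  "succ_bcast P V E L L' v m \<longleftrightarrow>
     (L v, Bcast m, L' v) \<in> trans P \<and>
     (\<forall>w \<in> V. (v, w) \<in> E \<longrightarrow> (L w, Recv m, L' w) \<in> trans P) \<and>
     (\<forall>w \<in> V. w \<noteq> v \<and> (v, w) \<notin> E \<longrightarrow> L' w = L w)"

definition lost_bcast :: "('q, 'm) protocol \<Rightarrow> 'v set \<Rightarrow>
    ('v \<Rightarrow> 'q) \<Rightarrow> ('v \<Rightarrow> 'q) \<Rightarrow> 'v \<Rightarrow> 'm \<Rightarrow> bool" where
  "lost_bcast P V L L' v m \<longleftrightarrow>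
     (L v, Bcast m, L' v) \<in> trans P \<and> (\<forall>w \<in> V. w \<noteq> v \<longrightarrow> L' w = L w)"

definition reconf_step :: "('q, 'm) protocol \<Rightarrow> ('v, 'q) config \<Rightarrow> ('v, 'q) config \<Rightarrow> bool" where
  "reconf_step P \<gamma> \<gamma>' \<longleftrightarrow>
     nodes \<gamma>' = nodes \<gamma> \<and> is_config P \<gamma>' \<and>
     (\<exists>v \<in> nodes \<gamma>. \<exists>m. succ_bcast P (nodes \<gamma>) (edges \<gamma>) (label \<gamma>) (label \<gamma>') v m)"

definition lossy_step :: "('q, 'm) protocol \<Rightarrow> ('v, 'q) config \<Rightarrow> ('v, 'q) config \<Rightarrow> bool" where
  "lossy_step P \<gamma> \<gamma>' \<longleftrightarrow>
     nodes \<gamma>' = nodes \<gamma> \<and> edges \<gamma>' = edges \<gamma> \<and> is_config P \<gamma>' \<and>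
     (\<exists>v \<in> nodes \<gamma>. \<exists>m.
        lost_bcast P (nodes \<gamma>) (label \<gamma>) (label \<gamma>') v m \<or>
        succ_bcast P (nodes \<gamma>) (edges \<gamma>) (label \<gamma>) (label \<gamma>') v m)"

definition execution ::
    "(('q, 'm) protocol \<Rightarrow> ('v, 'q) config \<Rightarrow> ('v, 'q) config \<Rightarrow> bool) \<Rightarrow>
     ('q, 'm) protocol \<Rightarrow> ('v, 'q) config list \<Rightarrow> bool" where
  "execution step P xs \<longleftrightarrow>
     xs \<noteq> [] \<and> initial_config P (hd xs) \<and>
     (\<forall>i. Suc i < length xs \<longrightarrow> step P (xs ! i) (xs ! Suc i))"

definition num_nodes :: "('v, 'q) config list \<Rightarrow> nat" where
  "num_nodes xs = card (nodes (hd xs))"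

definition covers :: "('v, 'q) config list \<Rightarrow> 'q set \<Rightarrow> bool" where
  "covers xs F \<longleftrightarrow> (\<exists>v \<in> nodes (last xs). label (last xs) v \<in> F)"

end

theory Submission
  imports Defs "HOL-Library.Countable"
begin

text \<open>In \<open>P\<^sub>n\<close> a counter has to be raised from 0 to \<open>n\<close>, one increment \<open>Inc j\<close> per round,
  by a helper. After sending \<open>Inc j\<close> the helper is re-enabled only by \<open>Kill j\<close>, which also
  kills every live counter hearing it, and a relay may send \<open>Kill j\<close> only after an \<open>Ack\<close> of
  a live counter has armed it. With reconfiguration three nodes suffice: each round the single
  edge is moved so that the relay hears the counter's \<open>Ack\<close> but the counter misses the
  relay's \<open>Kill\<close>. With fixed edges, a relay that has sent \<open>Kill\<close> is disarmed and has no
  live counter as neighbour, so it can never be armed again. Each round thus uses up a relay: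
  the helper index is at most the number of spent relays and the counter value at most one
  more, so covering the counter value \<open>n\<close> takes at least \<open>n - 1\<close> nodes.\<close>

lemma execution_snoc:
  assumes "execution step P xs" and "step P (last xs) \<gamma>"
  shows "execution step P (xs @ [\<gamma>])"
  using assms unfolding execution_def
  by (auto simp: nth_append last_conv_nth less_Suc_eq hd_append
      dest: arg_cong[where f = "\<lambda>k. k - 1"])

lemma execution_last_invariant:
  assumes "execution step P xs" and "I (hd xs)"
    and "\<And>\<gamma> \<gamma>'. I \<gamma> \<Longrightarrow> step P \<gamma> \<gamma>' \<Longrightarrow> I \<gamma>'"
  shows "I (last xs)"
proof -
  have "I (xs ! i)" if "i < length xs" for i
    using that
  proof (induction i)
    case 0
    then show ?case using assms(2) by (simp add: hd_conv_nth)
  next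
    case (Suc i)
    then show ?case using assms(1,3) by (auto simp: execution_def)
  qed
  then show ?thesis using assms(1) by (simp add: execution_def last_conv_nth)
qed

text \<open>Receptions are given by a function, which makes the protocol complete for receptions;
  states and messages are transported to \<^typ>\<open>nat\<close> along \<^const>\<open>to_nat\<close>.\<close>

definition nat_protocol :: "'q::countable set \<Rightarrow> 'q set \<Rightarrow> 'm::countable set \<Rightarrow>
    ('q \<Rightarrow> 'm \<Rightarrow> 'q) \<Rightarrow> ('q \<Rightarrow> 'm \<Rightarrow> 'q \<Rightarrow> bool) \<Rightarrow> (nat, nat) protocol" where
  "nat_protocol Q I M rcv bc =
     \<lparr>states = to_nat ` Q, init = to_nat ` I, msgs = to_nat ` M,
      trans = {(to_nat q, Recv (to_nat m), to_nat (rcv q m)) | q m. q \<in> Q \<and> m \<in> M}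
            \<union> {(to_nat q, Bcast (to_nat m), to_nat q') | q m q'. bc q m q'}\<rparr>"

lemma states_nat_protocol [simp]: "states (nat_protocol Q I M rcv bc) = to_nat ` Q"
  and init_nat_protocol [simp]: "init (nat_protocol Q I M rcv bc) = to_nat ` I"
  by (simp_all add: nat_protocol_def)

lemma wf_nat_protocol:
  assumes "finite Q" "finite M" "I \<subseteq> Q"
    and "\<And>q m. q \<in> Q \<Longrightarrow> m \<in> M \<Longrightarrow> rcv q m \<in> Q"
    and "\<And>q m q'. bc q m q' \<Longrightarrow> q \<in> Q \<and> m \<in> M \<and> q' \<in> Q"
  shows "wf_protocol (nat_protocol Q I M rcv bc)"
  using assms unfolding wf_protocol_def nat_protocol_def by fastforce

lemma nat_protocol_RecvD:
  "(a, Recv b, c) \<in> trans (nat_protocol Q I M rcv bc) \<Longrightarrow>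
     from_nat c = rcv (from_nat a) (from_nat b)"
  by (auto simp: nat_protocol_def)

lemma nat_protocol_BcastD:
  "(a, Bcast b, c) \<in> trans (nat_protocol Q I M rcv bc) \<Longrightarrow>
     bc (from_nat a) (from_nat b) (from_nat c)"
  by (auto simp: nat_protocol_def)

lemma nat_protocol_RecvI:
  "q \<in> Q \<Longrightarrow> m \<in> M \<Longrightarrow> rcv q m = q' \<Longrightarrow>
     (to_nat q, Recv (to_nat m), to_nat q') \<in> trans (nat_protocol Q I M rcv bc)"
  by (auto simp: nat_protocol_def)

lemma nat_protocol_BcastI:
  "bc q m q' \<Longrightarrow> (to_nat q, Bcast (to_nat m), to_nat q') \<in> trans (nat_protocol Q I M rcv bc)"
  by (auto simp: nat_protocol_def)

lemma lossy_step_nat_protocolE: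
  assumes "lossy_step (nat_protocol Q I M rcv bc) \<gamma> \<gamma>'"
  obtains v m S where "v \<in> nodes \<gamma>"
    and "bc (from_nat (label \<gamma> v)) m (from_nat (label \<gamma>' v))"
    and "\<And>w. w \<in> nodes \<gamma> \<Longrightarrow> w \<noteq> v \<Longrightarrow> from_nat (label \<gamma>' w) =
           (if S \<and> (v, w) \<in> edges \<gamma> then rcv (from_nat (label \<gamma> w)) m else from_nat (label \<gamma> w))"
proof -
  from assms obtain v m where v: "v \<in> nodes \<gamma>" and step:
    "lost_bcast (nat_protocol Q I M rcv bc) (nodes \<gamma>) (label \<gamma>) (label \<gamma>') v m \<or>
     succ_bcast (nat_protocol Q I M rcv bc) (nodes \<gamma>) (edges \<gamma>) (label \<gamma>) (label \<gamma>') v m"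
    by (auto simp: lossy_step_def)
  from step show thesis
  proof
    assume "lost_bcast (nat_protocol Q I M rcv bc) (nodes \<gamma>) (label \<gamma>) (label \<gamma>') v m"
    then show thesis
      by (intro that[OF v, of "from_nat m" False])
        (auto simp: lost_bcast_def dest: nat_protocol_BcastD)
  next
    assume "succ_bcast (nat_protocol Q I M rcv bc) (nodes \<gamma>) (edges \<gamma>) (label \<gamma>) (label \<gamma>') v m"
    then show thesis
      by (intro that[OF v, of "from_nat m" True])
        (auto simp: succ_bcast_def dest: nat_protocol_BcastD nat_protocol_RecvD)
  qed
qed

section \<open>The counter protocols\<close>

datatype state = Counter nat | Dead | Relay bool | Helper nat bool
datatype message = Ack | Inc nat | Kill nat

text \<open>The flag of \<^const>\<open>Relay\<close> records that the relay has been armed by an \<^const>\<open>Ack\<close>,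
  that of \<^term>\<open>Helper j\<close> that the helper may broadcast \<^term>\<open>Inc j\<close>.\<close>

instance state :: countable by countable_datatype
instance message :: countable by countable_datatype

definition counter_states :: "nat \<Rightarrow> state set" where
  "counter_states n =
     Counter ` {..n} \<union> {Dead} \<union> range Relay \<union> case_prod Helper ` ({..n} \<times> UNIV)"

definition counter_messages :: "nat \<Rightarrow> message set" where
  "counter_messages n = {Ack} \<union> Inc ` {..n} \<union> Kill ` {..n}"

fun receive :: "nat \<Rightarrow> state \<Rightarrow> message \<Rightarrow> state" where
  "receive n (Counter i) m =
     (if i < n then (case m of Inc k \<Rightarrow> if k = i then Counter (Suc i) else Counter i
                             | Kill k \<Rightarrow> Dead
                             | Ack \<Rightarrow> Counter i)
      else Counter i)"
| "receive n Dead m = Dead"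
| "receive n (Relay b) m = (if m = Ack then Relay True else Relay b)"
| "receive n (Helper j b) m =
     (if \<not> b \<and> m = Kill j \<and> j < n then Helper (Suc j) True else Helper j b)"

definition broadcast :: "nat \<Rightarrow> state \<Rightarrow> message \<Rightarrow> state \<Rightarrow> bool" where
  "broadcast n q m q' \<longleftrightarrow>
     (\<exists>i<n. q = Counter i \<and> m = Ack \<and> q' = Counter i) \<or>
     (\<exists>j\<le>n. q = Relay True \<and> m = Kill j \<and> q' = Relay False) \<or>
     (\<exists>j\<le>n. q = Helper j True \<and> m = Inc j \<and> q' = Helper j False)"

definition counter_protocol :: "nat \<Rightarrow> (nat, nat) protocol" where
  "counter_protocol n = nat_protocol (counter_states n) {Counter 0, Relay False, Helper 0 True}
     (counter_messages n) (receive n) (broadcast n)"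

definition counter_target :: "nat \<Rightarrow> nat set" where
  "counter_target n = {to_nat (Counter n)}"

lemma counter_states_simps [simp]:
  "Counter i \<in> counter_states n \<longleftrightarrow> i \<le> n"
  "Dead \<in> counter_states n"
  "Relay b \<in> counter_states n"
  "Helper j b \<in> counter_states n \<longleftrightarrow> j \<le> n"
  by (auto simp: counter_states_def)

lemma counter_messages_simps [simp]:
  "Ack \<in> counter_messages n"
  "Inc j \<in> counter_messages n \<longleftrightarrow> j \<le> n"
  "Kill j \<in> counter_messages n \<longleftrightarrow> j \<le> n"
  by (auto simp: counter_messages_def)

lemma wf_counter_protocol: "wf_protocol (counter_protocol n)"
  unfolding counter_protocol_def
proof (rule wf_nat_protocol)
  show "finite (counter_states n)" "finite (counter_messages n)"
    by (simp_all add: counter_states_def counter_messages_def)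
  show "receive n q m \<in> counter_states n"
    if "q \<in> counter_states n" "m \<in> counter_messages n" for q m
    using that by (cases q; cases m) (auto simp: counter_states_def counter_messages_def)
qed (auto simp: broadcast_def)

lemma counter_target_subset: "counter_target n \<subseteq> states (counter_protocol n)"
  by (simp add: counter_target_def counter_protocol_def)

section \<open>Three nodes suffice with reconfiguration\<close>

text \<open>Node 0 is the counter, node 1 the helper and node 2 the relay; the single edge is
  the link used by the next broadcast.\<close>

definition three_node_config :: "nat \<times> nat \<Rightarrow> state \<Rightarrow> state \<Rightarrow> state \<Rightarrow> (nat, nat) config" where
  "three_node_config e c h r =
     \<lparr>nodes = {0, 1, 2}, edges = {e, prod.swap e},
      label = \<lambda>v. to_nat (if v = 0 then c else if v = 1 then h else r)\<rparr>"

definition round_start :: "nat \<Rightarrow> (nat, nat) config" where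
  "round_start i = three_node_config (0, 1) (Counter i) (Helper i True) (Relay False)"

definition after_inc :: "nat \<Rightarrow> (nat, nat) config" where
  "after_inc i = three_node_config (0, 2) (Counter (Suc i)) (Helper i False) (Relay False)"

definition after_ack :: "nat \<Rightarrow> (nat, nat) config" where
  "after_ack i = three_node_config (1, 2) (Counter (Suc i)) (Helper i False) (Relay True)"

lemma nodes_three_node_config [simp]: "nodes (three_node_config e c h r) = {0, 1, 2}"
  and edges_three_node_config [simp]: "edges (three_node_config e c h r) = {e, prod.swap e}"
  by (simp_all add: three_node_config_def)

lemma is_config_three_node_config:
  assumes "fst e \<in> {0, 1, 2}" "snd e \<in> {0, 1, 2}" "fst e \<noteq> snd e"
    and "c \<in> counter_states n" "h \<in> counter_states n" "r \<in> counter_states n"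
  shows "is_config (counter_protocol n) (three_node_config e c h r)"
  using assms
  by (cases e) (auto simp: is_config_def three_node_config_def counter_protocol_def sym_def irrefl_def)

lemma reconf_step_inc:
  assumes "i < n"
  shows "reconf_step (counter_protocol n) (round_start i) (after_inc i)"
proof -
  have "succ_bcast (counter_protocol n) {0, 1, 2} {(0, 1), (1, 0)}
      (label (round_start i)) (label (after_inc i)) 1 (to_nat (Inc i))"
    using assms unfolding counter_protocol_def
    by (auto simp: succ_bcast_def round_start_def after_inc_def three_node_config_def
        broadcast_def intro!: nat_protocol_BcastI nat_protocol_RecvI)
  then show ?thesis
    using assms
    by (auto simp: reconf_step_def round_start_def after_inc_def is_config_three_node_config)
qed

lemma reconf_step_ack:
  assumes "Suc i < n"
  shows "reconf_step (counter_protocol n) (after_inc i) (after_ack i)"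
proof -
  have "succ_bcast (counter_protocol n) {0, 1, 2} {(0, 2), (2, 0)}
      (label (after_inc i)) (label (after_ack i)) 0 (to_nat Ack)"
    using assms unfolding counter_protocol_def
    by (auto simp: succ_bcast_def after_ack_def after_inc_def three_node_config_def
        broadcast_def intro!: nat_protocol_BcastI nat_protocol_RecvI)
  then show ?thesis
    using assms
    by (auto simp: reconf_step_def after_ack_def after_inc_def is_config_three_node_config)
qed

lemma reconf_step_kill:
  assumes "Suc i < n"
  shows "reconf_step (counter_protocol n) (after_ack i) (round_start (Suc i))"
proof -
  have "succ_bcast (counter_protocol n) {0, 1, 2} {(1, 2), (2, 1)}
      (label (after_ack i)) (label (round_start (Suc i))) 2 (to_nat (Kill i))"
    using assms unfolding counter_protocol_def
    by (auto simp: succ_bcast_def after_ack_def round_start_def three_node_config_def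
        broadcast_def intro!: nat_protocol_BcastI nat_protocol_RecvI)
  then show ?thesis
    using assms
    by (auto simp: reconf_step_def after_ack_def round_start_def is_config_three_node_config)
qed

fun reconf_run :: "nat \<Rightarrow> (nat, nat) config list" where
  "reconf_run 0 = [round_start 0]"
| "reconf_run (Suc i) = reconf_run i @ [after_inc i, after_ack i, round_start (Suc i)]"

lemma reconf_run_not_Nil: "reconf_run i \<noteq> []"
  by (cases i) auto

lemma hd_reconf_run: "hd (reconf_run i) = round_start 0"
  by (induction i) (simp_all add: reconf_run_not_Nil)

lemma last_reconf_run: "last (reconf_run i) = round_start i"
  by (cases i) auto

lemma initial_round_start: "initial_config (counter_protocol n) (round_start 0)"
  by (auto simp: initial_config_def round_start_def is_config_three_node_config)
    (auto simp: three_node_config_def counter_protocol_def)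

lemma execution_reconf_run:
  "i < n \<Longrightarrow> execution reconf_step (counter_protocol n) (reconf_run i)"
proof (induction i)
  case 0
  then show ?case using initial_round_start by (simp add: execution_def)
next
  case (Suc i)
  then have "execution reconf_step (counter_protocol n) (reconf_run i @ [after_inc i])"
    by (simp add: execution_snoc last_reconf_run reconf_step_inc)
  then have "execution reconf_step (counter_protocol n) (reconf_run i @ [after_inc i, after_ack i])"
    using execution_snoc reconf_step_ack[OF Suc.prems] by fastforce
  then show ?case
    using execution_snoc reconf_step_kill[OF Suc.prems] by fastforce
qed

lemma reconf_covering_execution:
  "\<exists>xs :: (nat, nat) config list.
     execution reconf_step (counter_protocol n) xs \<and> covers xs (counter_target n) \<and>
     num_nodes xs = 3"
proof -
  obtain xs where exec: "execution reconf_step (counter_protocol n) xs"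
    and "hd xs = round_start 0"
    and "last xs = (if n = 0 then round_start 0 else after_inc (n - 1))"
  proof (cases n)
    case 0
    then show thesis
      using that[of "reconf_run 0"] initial_round_start
      by (simp add: execution_def)
  next
    case (Suc k)
    then show thesis
      using that[of "reconf_run k @ [after_inc k]"]
      by (simp add: execution_snoc execution_reconf_run last_reconf_run hd_reconf_run
          reconf_run_not_Nil reconf_step_inc)
  qed
  then have "covers xs (counter_target n)" and "num_nodes xs = 3"
    by (auto simp: covers_def num_nodes_def counter_target_def round_start_def after_inc_def
        three_node_config_def)
  with exec show ?thesis by blast
qed

section \<open>Fixed topologies need linearly many nodes\<close>

definition live_counter :: "nat \<Rightarrow> state \<Rightarrow> bool" where
  "live_counter n q \<longleftrightarrow> (\<exists>i<n. q = Counter i)"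

definition spent_relays :: "nat \<Rightarrow> 'v set \<Rightarrow> ('v \<times> 'v) set \<Rightarrow> ('v \<Rightarrow> state) \<Rightarrow> 'v set" where
  "spent_relays n V E s =
     {u \<in> V. s u = Relay False \<and> (\<forall>w \<in> V. (u, w) \<in> E \<longrightarrow> \<not> live_counter n (s w))}"

definition progress_bounded :: "nat \<Rightarrow> 'v set \<Rightarrow> ('v \<times> 'v) set \<Rightarrow> ('v \<Rightarrow> state) \<Rightarrow> bool" where
  "progress_bounded n V E s \<longleftrightarrow>
     (\<forall>w \<in> V. \<forall>j b. s w = Helper j b \<longrightarrow> j \<le> card (spent_relays n V E s)) \<and>
     (\<forall>w \<in> V. \<forall>i. s w = Counter i \<longrightarrow> i \<le> Suc (card (spent_relays n V E s)))"

lemma receive_not_live: "\<not> live_counter n q \<Longrightarrow> \<not> live_counter n (receive n q m)"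
  by (cases q; cases m) (auto simp: live_counter_def)

lemma receive_Kill_not_live: "\<not> live_counter n (receive n q (Kill k))"
  by (cases q) (auto simp: live_counter_def)

lemma receive_eq_Counter:
  "receive n q m = Counter i \<Longrightarrow> q = Counter i \<or> (\<exists>k. i = Suc k \<and> q = Counter k \<and> m = Inc k)"
  by (cases q; cases m) (auto split: if_splits)

lemma receive_eq_Helper:
  "receive n q m = Helper j b \<Longrightarrow>
     q = Helper j b \<or> (\<exists>k. j = Suc k \<and> q = Helper k False \<and> m = Kill k)"
  by (cases q; cases m) (auto split: if_splits)

lemma broadcast_Ack_live: "broadcast n q Ack q' \<Longrightarrow> live_counter n q"
  and broadcast_not_live: "broadcast n q m q' \<Longrightarrow> \<not> live_counter n q \<Longrightarrow> \<not> live_counter n q'"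
  and broadcast_Inc: "broadcast n q (Inc k) q' \<Longrightarrow> q = Helper k True"
  and broadcast_Kill: "broadcast n q (Kill k) q' \<Longrightarrow> q = Relay True \<and> q' = Relay False"
  and broadcast_eq_Counter: "broadcast n q m (Counter i) \<Longrightarrow> q = Counter i"
  and broadcast_eq_Helper: "broadcast n q m (Helper j b) \<Longrightarrow> q = Helper j True"
  and broadcast_not_spent: "\<not> broadcast n (Relay False) m q'"
  by (auto simp: broadcast_def live_counter_def)

text \<open>One lossy step: \<open>S\<close> distinguishes a successful broadcast of \<open>m\<close> by \<open>v\<close>, received by
  all its neighbours, from a lost one.\<close>

locale counter_move =
  fixes n :: nat and V :: "'v set" and E :: "('v \<times> 'v) set" and s s' :: "'v \<Rightarrow> state"
    and v :: 'v and m :: message and S :: bool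
  assumes finite: "finite V" and sym: "sym E" and irrefl: "irrefl E" and sender: "v \<in> V"
    and broadcast: "broadcast n (s v) m (s' v)"
    and update: "\<And>w. w \<in> V \<Longrightarrow> w \<noteq> v \<Longrightarrow>
                   s' w = (if S \<and> (v, w) \<in> E then receive n (s w) m else s w)"
begin

lemma spent_relays_mono: "spent_relays n V E s \<subseteq> spent_relays n V E s'"
proof
  fix u assume "u \<in> spent_relays n V E s"
  then have u: "u \<in> V" "s u = Relay False"
    and quiet: "\<And>w. w \<in> V \<Longrightarrow> (u, w) \<in> E \<Longrightarrow> \<not> live_counter n (s w)"
    by (auto simp: spent_relays_def)
  have "u \<noteq> v" using broadcast broadcast_not_spent u(2) by metis
  have "s' u = Relay False"
  proof (cases "S \<and> (v, u) \<in> E")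
    case True
    then have "\<not> live_counter n (s v)" using quiet sender sym by (meson symD)
    then have "m \<noteq> Ack" using broadcast broadcast_Ack_live by blast
    then show ?thesis using update[OF u(1) \<open>u \<noteq> v\<close>] True u(2) by simp
  next
    case False
    then show ?thesis using update[OF u(1) \<open>u \<noteq> v\<close>] u(2) by simp
  qed
  moreover have "\<not> live_counter n (s' w)" if "w \<in> V" "(u, w) \<in> E" for w
    using quiet[OF that] update[OF that(1)] broadcast broadcast_not_live receive_not_live
    by (cases "w = v") auto
  ultimately show "u \<in> spent_relays n V E s'" using u(1) by (simp add: spent_relays_def)
qed

lemma card_spent_relays_mono: "card (spent_relays n V E s) \<le> card (spent_relays n V E s')"
  using spent_relays_mono finite by (intro card_mono) (auto simp: spent_relays_def)

lemma card_spent_relays_Kill: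
  assumes "S" and "m = Kill k"
  shows "Suc (card (spent_relays n V E s)) \<le> card (spent_relays n V E s')"
proof -
  have relay: "s v = Relay True" "s' v = Relay False"
    using broadcast broadcast_Kill assms(2) by blast+
  have "\<not> live_counter n (s' w)" if "w \<in> V" "(v, w) \<in> E" for w
  proof -
    have "w \<noteq> v" using that(2) irrefl by (auto simp: irrefl_def)
    then show ?thesis using update[OF that(1)] assms that(2) receive_Kill_not_live by simp
  qed
  then have "v \<in> spent_relays n V E s' - spent_relays n V E s"
    using sender relay by (auto simp: spent_relays_def)
  then have "insert v (spent_relays n V E s) \<subseteq> spent_relays n V E s'"
    and "v \<notin> spent_relays n V E s"
    using spent_relays_mono by auto
  moreover have "finite (spent_relays n V E s')" "finite (spent_relays n V E s)"
    using finite by (simp_all add: spent_relays_def)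
  ultimately show ?thesis by (metis card_insert_disjoint card_mono)
qed

lemma updated_cases:
  assumes "w \<in> V"
  obtains "w = v" | "s' w = s w" | "w \<noteq> v" and "S" and "s' w = receive n (s w) m"
  using update[OF assms] by (cases "w = v"; cases "S \<and> (v, w) \<in> E") auto

lemma helper_index_bound:
  assumes bounded: "progress_bounded n V E s" and "w \<in> V" and helper': "s' w = Helper j b"
  shows "j \<le> card (spent_relays n V E s')"
proof -
  have helper: "j \<le> card (spent_relays n V E s)" if "w \<in> V" "s w = Helper j b" for w j b
    using bounded that by (auto simp: progress_bounded_def)
  have unchanged: "s w = Helper j b \<Longrightarrow> ?thesis"
    using helper[OF \<open>w \<in> V\<close>] card_spent_relays_mono by (meson le_trans)
  from \<open>w \<in> V\<close> show ?thesis
  proof (cases rule: updated_cases)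
    case 1
    then have "s v = Helper j True" using broadcast broadcast_eq_Helper helper' by auto
    from helper[OF sender this] show ?thesis using card_spent_relays_mono by linarith
  next
    case 2
    then show ?thesis using unchanged helper' by simp
  next
    case 3
    then have "receive n (s w) m = Helper j b" using helper' by simp
    then consider "s w = Helper j b" | k where "j = Suc k" "s w = Helper k False" "m = Kill k"
      using receive_eq_Helper by blast
    then show ?thesis
    proof cases
      case 1
      then show ?thesis by (rule unchanged)
    next
      case 2
      then show ?thesis
        using helper[OF \<open>w \<in> V\<close>] card_spent_relays_Kill[OF \<open>S\<close>] by fastforce
    qed
  qed
qed

lemma counter_value_bound:
  assumes bounded: "progress_bounded n V E s" and "w \<in> V" and counter': "s' w = Counter i"
  shows "i \<le> Suc (card (spent_relays n V E s'))"
proof -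
  have counter: "i \<le> Suc (card (spent_relays n V E s))" if "w \<in> V" "s w = Counter i" for w i
    using bounded that by (auto simp: progress_bounded_def)
  have unchanged: "s w = Counter i \<Longrightarrow> ?thesis"
    using counter[OF \<open>w \<in> V\<close>] card_spent_relays_mono by (meson Suc_le_mono le_trans)
  from \<open>w \<in> V\<close> show ?thesis
  proof (cases rule: updated_cases)
    case 1
    then have "s v = Counter i" using broadcast broadcast_eq_Counter counter' by auto
    from counter[OF sender this] show ?thesis using card_spent_relays_mono by linarith
  next
    case 2
    then show ?thesis using unchanged counter' by simp
  next
    case 3
    then have "receive n (s w) m = Counter i" using counter' by simp
    then consider "s w = Counter i" | k where "i = Suc k" "s w = Counter k" "m = Inc k"
      using receive_eq_Counter by blast
    then show ?thesis
    proof cases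
      case 1
      then show ?thesis by (rule unchanged)
    next
      case 2
      then have "s v = Helper k True" using broadcast broadcast_Inc by blast
      then have "k \<le> card (spent_relays n V E s)"
        using bounded sender by (auto simp: progress_bounded_def)
      then show ?thesis using 2 card_spent_relays_mono by linarith
    qed
  qed
qed

lemma progress_bounded_move: "progress_bounded n V E s \<Longrightarrow> progress_bounded n V E s'"
  using helper_index_bound counter_value_bound by (auto simp: progress_bounded_def)

end

definition state_at :: "('v, nat) config \<Rightarrow> 'v \<Rightarrow> state" where
  "state_at \<gamma> v = from_nat (label \<gamma> v)"

lemma progress_bounded_lossy_step:
  assumes step: "lossy_step (counter_protocol n) \<gamma> \<gamma>'"
    and config: "is_config (counter_protocol n) \<gamma>"
    and bounded: "progress_bounded n (nodes \<gamma>) (edges \<gamma>) (state_at \<gamma>)"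
  shows "progress_bounded n (nodes \<gamma>') (edges \<gamma>') (state_at \<gamma>')"
proof -
  obtain v m S where "v \<in> nodes \<gamma>"
    and "broadcast n (state_at \<gamma> v) m (state_at \<gamma>' v)"
    and "\<And>w. w \<in> nodes \<gamma> \<Longrightarrow> w \<noteq> v \<Longrightarrow> state_at \<gamma>' w =
           (if S \<and> (v, w) \<in> edges \<gamma> then receive n (state_at \<gamma> w) m else state_at \<gamma> w)"
    using step unfolding counter_protocol_def state_at_def
    by (elim lossy_step_nat_protocolE) blast
  then interpret counter_move n "nodes \<gamma>" "edges \<gamma>" "state_at \<gamma>" "state_at \<gamma>'" v m S
    using config by unfold_locales (auto simp: is_config_def)
  have "nodes \<gamma>' = nodes \<gamma>" "edges \<gamma>' = edges \<gamma>"
    using step by (auto simp: lossy_step_def)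
  then show ?thesis using progress_bounded_move bounded by simp
qed

lemma progress_bounded_initial:
  assumes "initial_config (counter_protocol n) \<gamma>"
  shows "progress_bounded n (nodes \<gamma>) (edges \<gamma>) (state_at \<gamma>)"
proof -
  have init: "state_at \<gamma> w \<in> {Counter 0, Relay False, Helper 0 True}" if "w \<in> nodes \<gamma>" for w
  proof -
    have "label \<gamma> w \<in> to_nat ` {Counter 0, Relay False, Helper 0 True}"
      using assms that by (auto simp: initial_config_def counter_protocol_def)
    then show ?thesis by (auto simp: state_at_def)
  qed
  show ?thesis
    unfolding progress_bounded_def
  proof (intro conjI ballI allI impI)
    fix w j b assume "w \<in> nodes \<gamma>" "state_at \<gamma> w = Helper j b"
    then show "j \<le> card (spent_relays n (nodes \<gamma>) (edges \<gamma>) (state_at \<gamma>))"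
      using init by fastforce
  next
    fix w i assume "w \<in> nodes \<gamma>" "state_at \<gamma> w = Counter i"
    then show "i \<le> Suc (card (spent_relays n (nodes \<gamma>) (edges \<gamma>) (state_at \<gamma>)))"
      using init by fastforce
  qed
qed

lemma lossy_covering_num_nodes:
  assumes exec: "execution lossy_step (counter_protocol n) xs"
    and covering: "covers xs (counter_target n)"
  shows "n \<le> Suc (num_nodes xs)"
proof -
  let ?inv = "\<lambda>\<gamma>. nodes \<gamma> = nodes (hd xs) \<and> is_config (counter_protocol n) \<gamma> \<and>
    progress_bounded n (nodes \<gamma>) (edges \<gamma>) (state_at \<gamma>)"
  have "initial_config (counter_protocol n) (hd xs)"
    using exec by (simp add: execution_def)
  then have "?inv (hd xs)"
    using progress_bounded_initial by (simp add: initial_config_def)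
  moreover have "?inv \<gamma>'" if inv: "?inv \<gamma>" and step: "lossy_step (counter_protocol n) \<gamma> \<gamma>'"
    for \<gamma> \<gamma>'
  proof -
    have "nodes \<gamma>' = nodes \<gamma>" "is_config (counter_protocol n) \<gamma>'"
      using step by (simp_all add: lossy_step_def)
    then show ?thesis using inv progress_bounded_lossy_step[OF step] by auto
  qed
  ultimately have "?inv (last xs)"
    by (rule execution_last_invariant[OF exec, where I = ?inv])
  then have nodes: "nodes (last xs) = nodes (hd xs)"
    and finite: "finite (nodes (last xs))"
    and bounded: "progress_bounded n (nodes (last xs)) (edges (last xs)) (state_at (last xs))"
    by (auto simp: is_config_def)
  from covering obtain v where "v \<in> nodes (last xs)" "state_at (last xs) v = Counter n"
    by (auto simp: covers_def counter_target_def state_at_def)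
  with bounded
  have "n \<le> Suc (card (spent_relays n (nodes (last xs)) (edges (last xs)) (state_at (last xs))))"
    unfolding progress_bounded_def by blast
  also have "\<dots> \<le> Suc (card (nodes (last xs)))"
    using finite by (simp add: card_mono spent_relays_def)
  finally show ?thesis by (simp add: nodes num_nodes_def)
qed

theorem theorem4p1:
  shows "\<exists>(P :: nat \<Rightarrow> (nat, nat) protocol) (F :: nat \<Rightarrow> nat set).
     (\<forall>n. wf_protocol (P n) \<and> F n \<subseteq> states (P n)) \<and>
     (\<forall>n. \<exists>xs :: (nat, nat) config list.
          execution reconf_step (P n) xs \<and> covers xs (F n) \<and> num_nodes xs = 3) \<and>
     (\<exists>c :: real. c > 0 \<and> (\<exists>N. \<forall>n \<ge> N. \<forall>xs :: (nat, nat) config list.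
          execution lossy_step (P n) xs \<and> covers xs (F n) \<longrightarrow> real (num_nodes xs) \<ge> c * real n))"
proof -
  have "real (num_nodes xs) \<ge> 1 / 2 * real n"
    if "n \<ge> 2" and "execution lossy_step (counter_protocol n) xs"
      and "covers xs (counter_target n)" for n and xs :: "(nat, nat) config list"
    using that lossy_covering_num_nodes[of n xs] by linarith
  then have "\<exists>c :: real. c > 0 \<and> (\<exists>N. \<forall>n \<ge> N. \<forall>xs :: (nat, nat) config list.
      execution lossy_step (counter_protocol n) xs \<and> covers xs (counter_target n) \<longrightarrow>
      real (num_nodes xs) \<ge> c * real n)"
    by (intro exI[of _ "1 / 2"] exI[of _ 2]) auto
  then show ?thesis
    using wf_counter_protocol counter_target_subset reconf_covering_execution
    by - (rule exI[of _ counter_protocol], rule exI[of _ counter_target], blast)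
qed

end
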